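(* Let $(L,\vee,\wedge,0,1)$ be a complemented lattice with $0\ne1$ and $a\in L$. Then the following are equivalent: (i) for all $x\in L$: $a\to x=\{1\}$ if and only if $a\le x$; (ii) $a$ is a minimal element of $a^{++}$.
   Context: For $a\in L$, $a^+:=\{x\in L\mid a\vee x=1,\ a\wedge x=0\}$ (the set of all complements of $a$); for $A\subseteq L$, $A^+:=\{x\in L\mid a\vee x=1\text{ and }a\wedge x=0\text{ for all }a\in A\}$, and $a^{++}:=(a^+)^+$. For $a,b\in L$, $a\to b:=\{x\vee(a\wedge b)\mid x\in a^+\}$. *)

theory Defs
  imports Main
begin

text \<open>Complements in a bounded lattice (the lattice need not be distributive,
so an element may have several complements).\<close>

definition comps :: "'a::bounded_lattice \<Rightarrow> 'a set" where
  "comps a = {x. sup a x = top \<and> inf a x = bot}"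

definition compsS :: "'a::bounded_lattice set \<Rightarrow> 'a set" where
  "compsS A = {x. \<forall>a\<in>A. sup a x = top \<and> inf a x = bot}"

definition comps2 :: "'a::bounded_lattice \<Rightarrow> 'a set" where
  "comps2 a = compsS (comps a)"

definition arrow :: "'a::bounded_lattice \<Rightarrow> 'a \<Rightarrow> 'a set" where
  "arrow a b = {sup x (inf a b) | x. x \<in> comps a}"

definition minimal_in :: "'a::order \<Rightarrow> 'a set \<Rightarrow> bool" where
  "minimal_in a A \<longleftrightarrow> a \<in> A \<and> (\<forall>y\<in>A. y \<le> a \<longrightarrow> y = a)"

end

theory Submission
  imports Defs
begin

text \<open>For \<open>y \<le> a\<close> the meet condition \<open>c \<sqinter> y = 0\<close> of \<open>y \<in> a\<^sup>+\<^sup>+\<close> is automatic for every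
complement \<open>c\<close> of \<open>a\<close>, so \<open>a \<rightarrow> x = {1}\<close> says exactly that \<open>a \<sqinter> x \<in> a\<^sup>+\<^sup>+\<close>.
Since every element of \<open>a\<^sup>+\<^sup>+\<close> below \<open>a\<close> has the form \<open>a \<sqinter> x\<close>, condition (i) says that
\<open>a\<close> is the only element of \<open>a\<^sup>+\<^sup>+\<close> below \<open>a\<close>, which is minimality.\<close>

lemma minimal_in_iff_inf_mem:
  fixes a :: "'a::lattice"
  assumes "a \<in> A"
  shows "minimal_in a A \<longleftrightarrow> (\<forall>x. inf a x \<in> A \<longrightarrow> a \<le> x)"
  using assms unfolding minimal_in_def
  by (metis antisym inf.absorb_iff2 inf.cobounded1 inf.cobounded2)

lemma self_mem_comps2:
  fixes a :: "'a::bounded_lattice"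
  shows "a \<in> comps2 a"
  unfolding comps2_def compsS_def comps_def by (auto simp: sup_commute inf_commute)

lemma mem_comps2_iff_below:
  fixes a y :: "'a::bounded_lattice"
  assumes "y \<le> a"
  shows "y \<in> comps2 a \<longleftrightarrow> (\<forall>c\<in>comps a. sup c y = top)"
proof -
  have "inf c y = bot" if "c \<in> comps a" for c
  proof -
    have "inf c y \<le> inf c a" using assms by (simp add: le_infI2)
    also have "inf c a = bot" using that unfolding comps_def by (simp add: inf_commute)
    finally show ?thesis by (simp add: bot_unique)
  qed
  then show ?thesis unfolding comps2_def compsS_def by (auto simp: sup_commute inf_commute)
qed

lemma arrow_eq_top_iff:
  fixes a :: "'a::bounded_lattice"
  assumes "comps a \<noteq> {}"
  shows "arrow a x = {top} \<longleftrightarrow> (\<forall>c\<in>comps a. sup c (inf a x) = top)"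
proof
  assume "arrow a x = {top}"
  then show "\<forall>c\<in>comps a. sup c (inf a x) = top" unfolding arrow_def by blast
next
  assume tops: "\<forall>c\<in>comps a. sup c (inf a x) = top"
  obtain c where "c \<in> comps a" using assms by blast
  then show "arrow a x = {top}" using tops unfolding arrow_def by force
qed

lemma arrow_eq_top_iff_inf_mem_comps2:
  fixes a :: "'a::bounded_lattice"
  assumes "comps a \<noteq> {}"
  shows "arrow a x = {top} \<longleftrightarrow> inf a x \<in> comps2 a"
  using arrow_eq_top_iff[OF assms] mem_comps2_iff_below[of "inf a x" a] by simp

text \<open>Complementedness is only used to give \<open>a\<close> a complement.\<close>

theorem proposition4:
  fixes a :: "'a::bounded_lattice"
  assumes complemented: "\<forall>x::'a. \<exists>y. sup x y = top \<and> inf x y = bot"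
    and nontriv: "(bot::'a) \<noteq> top"
  shows "(\<forall>x. arrow a x = {top} \<longleftrightarrow> a \<le> x) \<longleftrightarrow> minimal_in a (comps2 a)"
proof -
  have "comps a \<noteq> {}" using complemented unfolding comps_def by blast
  then have "(\<forall>x. arrow a x = {top} \<longleftrightarrow> a \<le> x) \<longleftrightarrow> (\<forall>x. inf a x \<in> comps2 a \<longleftrightarrow> a \<le> x)"
    by (simp add: arrow_eq_top_iff_inf_mem_comps2)
  also have "\<dots> \<longleftrightarrow> (\<forall>x. inf a x \<in> comps2 a \<longrightarrow> a \<le> x)"
    using self_mem_comps2[of a] by (auto simp: inf_absorb1)
  also have "\<dots> \<longleftrightarrow> minimal_in a (comps2 a)"
    by (simp add: minimal_in_iff_inf_mem self_mem_comps2)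
  finally show ?thesis .
qed

end
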